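(* Let $G=(\mathfrak{N},\mathfrak{T},\mathfrak{R},\mathfrak{S})$ be a context-free grammar, $\Sigma$ a set of characters, $(\textsl{Lex},\textsl{Sel})$ a local lexing with respect to $\mathfrak{T}$ and $\Sigma$, and $D\in\Sigma^*$. Then Earley's algorithm with local lexing is sound and complete: \[ D\in\mathcal{L}_\Sigma \quad\Longleftrightarrow\quad \exists\,\alpha.\ (\mathfrak{S}\rightarrow\alpha\,\bullet,\,0,\,|D|)\in\mathfrak{I}, \] where $\mathcal{L}_\Sigma=\{D\in\Sigma^*\mid \ell\ell(D)\neq\emptyset\}$ and $\ell\ell(D)$ and $\mathfrak{I}$ are as defined in the context.
   Context: Notation: for a set $U$, $U^*$ is the set of finite sequences over $U$, $\varepsilon$ the empty sequence, juxtaposition is concatenation, $|\alpha|$ the length and $\alpha_i$ ($0\le i<|\alpha|$) the $i$-th element. A context-free grammar $(\mathfrak{N},\mathfrak{T},\mathfrak{R},\mathfrak{S})$ has disjoint nonterminals $\mathfrak{N}$ and terminals $\mathfrak{T}$, rules $\mathfrak{R}\subseteq\mathfrak{N}\times(\mathfrak{N}\cup\mathfrak{T})^*$ (written $N\rightarrow\alpha$), start symbol $\mathfrak{S}$; $\alpha\Rightarrow\beta$ iff $\alpha=\alpha_0N\alpha_1$, $\beta=\alpha_0\gamma\alpha_1$ with $N\rightarrow\gamma$; $\overset{*}{\Rightarrow}$ is its reflexive-transitive closure. $\mathcal{L}=\{w\in\mathfrak{T}^*\mid\mathfrak{S}\overset{*}{\Rightarrow}w\}$ and $\mathcal{L}_{\text{prefix}}=\{w\in\mathfrak{T}^*\mid\exists\alpha\in(\mathfrak{N}\cup\mathfrak{T})^*.\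 \mathfrak{S}\overset{*}{\Rightarrow}w\alpha\}$. Tokens: a token is a pair $x=(t,c)\in\mathfrak{T}\times\Sigma^*$; $[x]=t$, $\overline{x}=c$; it is empty iff $|c|=0$. For a token sequence (path) $q=x_0\ldots x_r$, $[q]=[x_0]\ldots[x_r]\in\mathfrak{T}^*$ and $\overline{q}=\overline{x_0}\ldots\overline{x_r}\in\Sigma^*$. Local lexing: a pair $(\textsl{Lex},\textsl{Sel})$ where $\textsl{Lex}$ assigns to each $t\in\mathfrak{T}$ a function $\textsl{Lex}(t)$ which, given $D\in\Sigma^*$ and $k\in\{0,\ldots,|D|\}$, returns a set of tokens $(t,c)$ with $k+|c|\le|D|$ and $c_i=D_{k+i}$ for $0\le i\le|c|-1$; and $\textsl{Sel}$ maps any two token sets $A\subseteq B$ to a token set $\textsl{Sel}(A,B)$ with $A\subseteq\textsl{Sel}(A,B)\subseteq B$. Semantics: $\operatorname{limit} f\,X=\bigcup_{n\ge0}f^n(X)$. $\operatorname{Append}_k\,T\,P=P\cup\{pt\mid p\in P,\ |\overline{p}|=k,\ t\in T,\ [pt]\in\mathcal{L}_{\text{prefix}}\}$. For $k\in\{0,\ldots,|D|\}$: $\mathcal{X}_k=\{x\in\mathfrak{T}\times\Sigma^*\mid x\in\textsl{Lex}([x])(D,k)\}$; $\mathcal{P}_0^0=\{\varepsilon\}$; $\mathcal{W}_k^u=\{x\in\mathcal{X}_k\mid\exists p\in\mathcal{P}_k^u.\ |\overline{p}|=k\wedge[px]\in\mathcal{L}_{\text{prefix}}\}$; $\mathcal{Z}_k^0=\emptyset$;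 $\mathcal{Z}_k^{u+1}=\textsl{Sel}(\mathcal{Z}_k^u,\mathcal{W}_k^u)$; $\mathcal{P}_k^{u+1}=\operatorname{limit}(\operatorname{Append}_k\,\mathcal{Z}_k^{u+1})\,\mathcal{P}_k^u$; $\mathcal{P}_k^\infty=\bigcup_u\mathcal{P}_k^u$; $\mathcal{P}_{k+1}^0=\mathcal{P}_k^\infty$. Finally $\mathfrak{P}=\mathcal{P}_{|D|}^\infty$ and $\ell\ell(D)=\{p\in\mathfrak{P}\mid|\overline{p}|=|D|\wedge[p]\in\mathcal{L}\}$. Earley items: an item is $(N\rightarrow\alpha\bullet\beta,i,j)$ with $(N\rightarrow\alpha\beta)\in\mathfrak{R}$, $0\le i\le j\le|D|$. For item sets $I$, token sets $T$, position $k$: $\operatorname{Init}=\{(\mathfrak{S}\rightarrow\bullet\alpha,0,0)\mid\mathfrak{S}\rightarrow\alpha\in\mathfrak{R}\}$; $\operatorname{Predict}\,k\,I=I\cup\{(M\rightarrow\bullet\gamma,k,k)\mid\exists N,\alpha,\beta,i.\ (N\rightarrow\alpha\bullet M\beta,i,k)\in I\wedge(M\rightarrow\gamma)\in\mathfrak{R}\}$; $\operatorname{Complete}\,k\,I=I\cup\{(N\rightarrow\alpha M\bullet\beta,i,k)\mid\exists j,\gamma.\ (N\rightarrow\alpha\bullet M\beta,i,j)\in I\wedge(M\rightarrow\gamma\bullet,j,k)\in I\}$; $\operatorname{Tokens}\,T\,k\,I=\textsl{Sel}\big(T,\{x\mid\exists X\in\mathfrak{T},N,\alpha,\beta,i.\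 (N\rightarrow\alpha\bullet X\beta,i,k)\in I\wedge x\in\textsl{Lex}(X)(D,k)\}\big)$; $\operatorname{Scan}\,T\,k\,I=I\cup\{(N\rightarrow\alpha X\bullet\beta,i,k+|c|)\mid(X,c)\in T\wedge(N\rightarrow\alpha\bullet X\beta,i,k)\in I\}$; $\pi_k\,T\,I=\operatorname{limit}(\operatorname{Scan}\,T\,k\circ\operatorname{Complete}\,k\circ\operatorname{Predict}\,k)\,I$. Then $\mathcal{J}_0^0=\pi_0\,\emptyset\,\operatorname{Init}$; $\mathcal{T}_k^0=\emptyset$; $\mathcal{T}_k^{u+1}=\operatorname{Tokens}\,\mathcal{T}_k^u\,k\,\mathcal{J}_k^u$; $\mathcal{J}_k^{u+1}=\pi_k\,\mathcal{T}_k^{u+1}\,\mathcal{J}_k^u$; $\mathcal{I}_k=\bigcup_u\mathcal{J}_k^u$; $\mathcal{J}_{k+1}^0=\pi_{k+1}\,\emptyset\,\mathcal{I}_k$; and $\mathfrak{I}=\mathcal{I}_{|D|}$. *)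

theory Defs
  imports Main
begin

text \<open>Characters form the type 'c (the character set Sigma is UNIV :: 'c set).\<close>

definition derives1 :: "('a \<times> 'a list) set \<Rightarrow> 'a list \<Rightarrow> 'a list \<Rightarrow> bool" where
  "derives1 R \<alpha> \<beta> \<longleftrightarrow> (\<exists>\<alpha>0 N \<alpha>1 \<gamma>. \<alpha> = \<alpha>0 @ [N] @ \<alpha>1 \<and> \<beta> = \<alpha>0 @ \<gamma> @ \<alpha>1 \<and> (N, \<gamma>) \<in> R)"

definition derives :: "('a \<times> 'a list) set \<Rightarrow> 'a list \<Rightarrow> 'a list \<Rightarrow> bool" where
  "derives R = (derives1 R)\<^sup>*\<^sup>*"

definition Lang :: "'a set \<Rightarrow> 'a set \<Rightarrow> ('a \<times> 'a list) set \<Rightarrow> 'a \<Rightarrow> 'a list set" where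
  "Lang NN TT R S = {w. w \<in> lists TT \<and> derives R [S] w}"

definition Lprefix :: "'a set \<Rightarrow> 'a set \<Rightarrow> ('a \<times> 'a list) set \<Rightarrow> 'a \<Rightarrow> 'a list set" where
  "Lprefix NN TT R S = {w. w \<in> lists TT \<and> (\<exists>\<alpha> \<in> lists (NN \<union> TT). derives R [S] (w @ \<alpha>))}"

definition is_cfg :: "'a set \<Rightarrow> 'a set \<Rightarrow> ('a \<times> 'a list) set \<Rightarrow> 'a \<Rightarrow> bool" where
  "is_cfg NN TT R S \<longleftrightarrow> NN \<inter> TT = {} \<and> S \<in> NN \<and> R \<subseteq> NN \<times> lists (NN \<union> TT)"

type_synonym ('a, 'c) token = "'a \<times> 'c list"
type_synonym ('a, 'c) path = "('a, 'c) token list"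

definition terms_of :: "('a, 'c) path \<Rightarrow> 'a list" where
  "terms_of p = map fst p"

definition chars_of :: "('a, 'c) path \<Rightarrow> 'c list" where
  "chars_of p = concat (map snd p)"

text \<open>Lex t D k: the tokens recognised for terminal t in document D at position k.\<close>
definition is_local_lexing ::
  "'a set \<Rightarrow> ('a \<Rightarrow> 'c list \<Rightarrow> nat \<Rightarrow> ('a, 'c) token set)
    \<Rightarrow> (('a, 'c) token set \<Rightarrow> ('a, 'c) token set \<Rightarrow> ('a, 'c) token set) \<Rightarrow> bool" where
  "is_local_lexing TT Lex Sel \<longleftrightarrow>
     (\<forall>t \<in> TT. \<forall>D k. k \<le> length D \<longrightarrow> (\<forall>x \<in> Lex t D k.
        fst x = t \<and> k + length (snd x) \<le> length D \<and>
        (\<forall>i < length (snd x). snd x ! i = D ! (k + i)))) \<and>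
     (\<forall>A B. A \<subseteq> B \<longrightarrow> A \<subseteq> Sel A B \<and> Sel A B \<subseteq> B)"

definition limit :: "('x set \<Rightarrow> 'x set) \<Rightarrow> 'x set \<Rightarrow> 'x set" where
  "limit f X = (\<Union>n. (f ^^ n) X)"

definition Append :: "'a list set \<Rightarrow> nat \<Rightarrow> ('a, 'c) token set \<Rightarrow> ('a, 'c) path set \<Rightarrow> ('a, 'c) path set" where
  "Append Lp k T P = P \<union> {p @ [t] | p t. p \<in> P \<and> length (chars_of p) = k \<and> t \<in> T \<and> terms_of (p @ [t]) \<in> Lp}"

definition Xk :: "'a set \<Rightarrow> ('a \<Rightarrow> 'c list \<Rightarrow> nat \<Rightarrow> ('a, 'c) token set) \<Rightarrow> 'c list \<Rightarrow> nat \<Rightarrow> ('a, 'c) token set" where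
  "Xk TT Lex D k = {x. fst x \<in> TT \<and> x \<in> Lex (fst x) D k}"

definition Wk :: "'a set \<Rightarrow> ('a \<Rightarrow> 'c list \<Rightarrow> nat \<Rightarrow> ('a, 'c) token set) \<Rightarrow> 'c list \<Rightarrow> 'a list set
    \<Rightarrow> nat \<Rightarrow> ('a, 'c) path set \<Rightarrow> ('a, 'c) token set" where
  "Wk TT Lex D Lp k P = {x \<in> Xk TT Lex D k. \<exists>p \<in> P. length (chars_of p) = k \<and> terms_of (p @ [x]) \<in> Lp}"

text \<open>PZ ... k P0 u = (P_k^u, Z_k^u) where P0 = P_k^0.\<close>
primrec PZ :: "'a set \<Rightarrow> ('a \<Rightarrow> 'c list \<Rightarrow> nat \<Rightarrow> ('a, 'c) token set)
    \<Rightarrow> (('a, 'c) token set \<Rightarrow> ('a, 'c) token set \<Rightarrow> ('a, 'c) token set) \<Rightarrow> 'c list \<Rightarrow> 'a list set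
    \<Rightarrow> nat \<Rightarrow> ('a, 'c) path set \<Rightarrow> nat \<Rightarrow> ('a, 'c) path set \<times> ('a, 'c) token set" where
  "PZ TT Lex Sel D Lp k P0 0 = (P0, {})"
| "PZ TT Lex Sel D Lp k P0 (Suc u) =
     (let Z' = Sel (snd (PZ TT Lex Sel D Lp k P0 u)) (Wk TT Lex D Lp k (fst (PZ TT Lex Sel D Lp k P0 u)))
      in (limit (Append Lp k Z') (fst (PZ TT Lex Sel D Lp k P0 u)), Z'))"

definition Pinf where
  "Pinf TT Lex Sel D Lp k P0 = (\<Union>u. fst (PZ TT Lex Sel D Lp k P0 u))"

text \<open>Pstart ... k = P_k^0.\<close>
primrec Pstart where
  "Pstart TT Lex Sel D Lp 0 = {[]}"
| "Pstart TT Lex Sel D Lp (Suc k) = Pinf TT Lex Sel D Lp k (Pstart TT Lex Sel D Lp k)"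

definition PP :: "'a set \<Rightarrow> 'a set \<Rightarrow> ('a \<times> 'a list) set \<Rightarrow> 'a
    \<Rightarrow> ('a \<Rightarrow> 'c list \<Rightarrow> nat \<Rightarrow> ('a, 'c) token set)
    \<Rightarrow> (('a, 'c) token set \<Rightarrow> ('a, 'c) token set \<Rightarrow> ('a, 'c) token set) \<Rightarrow> 'c list \<Rightarrow> ('a, 'c) path set" where
  "PP NN TT R S Lex Sel D =
     (let Lp = Lprefix NN TT R S
      in Pinf TT Lex Sel D Lp (length D) (Pstart TT Lex Sel D Lp (length D)))"

definition ll :: "'a set \<Rightarrow> 'a set \<Rightarrow> ('a \<times> 'a list) set \<Rightarrow> 'a
    \<Rightarrow> ('a \<Rightarrow> 'c list \<Rightarrow> nat \<Rightarrow> ('a, 'c) token set)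
    \<Rightarrow> (('a, 'c) token set \<Rightarrow> ('a, 'c) token set \<Rightarrow> ('a, 'c) token set) \<Rightarrow> 'c list \<Rightarrow> ('a, 'c) path set" where
  "ll NN TT R S Lex Sel D =
     {p \<in> PP NN TT R S Lex Sel D. length (chars_of p) = length D \<and> terms_of p \<in> Lang NN TT R S}"

definition LangSigma where
  "LangSigma NN TT R S Lex Sel = {D. ll NN TT R S Lex Sel D \<noteq> {}}"

text \<open>Item N \<alpha> \<beta> i j stands for (N \<rightarrow> \<alpha> \<bullet> \<beta>, i, j).\<close>
datatype 'a item = Item 'a "'a list" "'a list" nat nat

definition Init :: "('a \<times> 'a list) set \<Rightarrow> 'a \<Rightarrow> 'a item set" where
  "Init R S = {Item S [] \<alpha> 0 0 | \<alpha>. (S, \<alpha>) \<in> R}"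

definition Predict :: "('a \<times> 'a list) set \<Rightarrow> nat \<Rightarrow> 'a item set \<Rightarrow> 'a item set" where
  "Predict R k I = I \<union> {Item M [] \<gamma> k k | M \<gamma>.
     (\<exists>N \<alpha> \<beta> i. Item N \<alpha> (M # \<beta>) i k \<in> I) \<and> (M, \<gamma>) \<in> R}"

definition Complete :: "nat \<Rightarrow> 'a item set \<Rightarrow> 'a item set" where
  "Complete k I = I \<union> {Item N (\<alpha> @ [M]) \<beta> i k | N \<alpha> M \<beta> i.
     \<exists>j \<gamma>. Item N \<alpha> (M # \<beta>) i j \<in> I \<and> Item M \<gamma> [] j k \<in> I}"

definition Tokens :: "'a set \<Rightarrow> ('a \<Rightarrow> 'c list \<Rightarrow> nat \<Rightarrow> ('a, 'c) token set)
    \<Rightarrow> (('a, 'c) token set \<Rightarrow> ('a, 'c) token set \<Rightarrow> ('a, 'c) token set) \<Rightarrow> 'c list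
    \<Rightarrow> ('a, 'c) token set \<Rightarrow> nat \<Rightarrow> 'a item set \<Rightarrow> ('a, 'c) token set" where
  "Tokens TT Lex Sel D T k I = Sel T {x. \<exists>X N \<alpha> \<beta> i. X \<in> TT \<and> Item N \<alpha> (X # \<beta>) i k \<in> I \<and> x \<in> Lex X D k}"

definition Scan :: "('a, 'c) token set \<Rightarrow> nat \<Rightarrow> 'a item set \<Rightarrow> 'a item set" where
  "Scan T k I = I \<union> {Item N (\<alpha> @ [X]) \<beta> i (k + length c) | N \<alpha> X \<beta> i c.
     (X, c) \<in> T \<and> Item N \<alpha> (X # \<beta>) i k \<in> I}"

definition pi :: "('a \<times> 'a list) set \<Rightarrow> nat \<Rightarrow> ('a, 'c) token set \<Rightarrow> 'a item set \<Rightarrow> 'a item set" where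
  "pi R k T I = limit (Scan T k \<circ> Complete k \<circ> Predict R k) I"

text \<open>JT ... k J0 u = (J_k^u, T_k^u) where J0 = J_k^0.\<close>
primrec JT :: "('a \<times> 'a list) set \<Rightarrow> 'a set \<Rightarrow> ('a \<Rightarrow> 'c list \<Rightarrow> nat \<Rightarrow> ('a, 'c) token set)
    \<Rightarrow> (('a, 'c) token set \<Rightarrow> ('a, 'c) token set \<Rightarrow> ('a, 'c) token set) \<Rightarrow> 'c list
    \<Rightarrow> nat \<Rightarrow> 'a item set \<Rightarrow> nat \<Rightarrow> 'a item set \<times> ('a, 'c) token set" where
  "JT R TT Lex Sel D k J0 0 = (J0, {})"
| "JT R TT Lex Sel D k J0 (Suc u) =
     (let T' = Tokens TT Lex Sel D (snd (JT R TT Lex Sel D k J0 u)) k (fst (JT R TT Lex Sel D k J0 u))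
      in (pi R k T' (fst (JT R TT Lex Sel D k J0 u)), T'))"

definition Ik where
  "Ik R TT Lex Sel D k J0 = (\<Union>u. fst (JT R TT Lex Sel D k J0 u))"

text \<open>Jstart ... k = J_k^0.\<close>
primrec Jstart :: "('a \<times> 'a list) set \<Rightarrow> 'a \<Rightarrow> 'a set \<Rightarrow> ('a \<Rightarrow> 'c list \<Rightarrow> nat \<Rightarrow> ('a, 'c) token set)
    \<Rightarrow> (('a, 'c) token set \<Rightarrow> ('a, 'c) token set \<Rightarrow> ('a, 'c) token set) \<Rightarrow> 'c list
    \<Rightarrow> nat \<Rightarrow> 'a item set" where
  "Jstart R S TT Lex Sel D 0 = pi R 0 ({} :: ('a, 'c) token set) (Init R S)"
| "Jstart R S TT Lex Sel D (Suc k) =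
     pi R (Suc k) ({} :: ('a, 'c) token set) (Ik R TT Lex Sel D k (Jstart R S TT Lex Sel D k))"

definition II :: "('a \<times> 'a list) set \<Rightarrow> 'a \<Rightarrow> 'a set \<Rightarrow> ('a \<Rightarrow> 'c list \<Rightarrow> nat \<Rightarrow> ('a, 'c) token set)
    \<Rightarrow> (('a, 'c) token set \<Rightarrow> ('a, 'c) token set \<Rightarrow> ('a, 'c) token set) \<Rightarrow> 'c list \<Rightarrow> 'a item set" where
  "II R S TT Lex Sel D = Ik R TT Lex Sel D (length D) (Jstart R S TT Lex Sel D (length D))"

end

theory Submission
  imports Defs
begin

text \<open>Both sides of the equivalence are governed by a family F of tokens, F j being the tokens
  selected at position j. The paths of the local-lexing semantics are exactly the token sequences
  that are admissible for F (every token lies in F at its starting position) and spell a prefix of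
  the language; the Earley items are exactly those derivable from F by the inductive rules of
  valid_item. Soundness and completeness of these rules relate an item expecting a terminal X at
  position k to an admissible path ending at k that can be extended by X. Hence Earley's algorithm
  and the semantics offer the same candidate tokens to Sel at every stage, their selections agree
  by induction over positions and stages, and a completed start item spanning D exists iff some
  admissible path spanning D spells a word of the language.\<close>

section \<open>Iteration to a limit\<close>

lemma subset_limit: "X \<subseteq> limit f X"
  unfolding limit_def by (metis UN_upper UNIV_I funpow_0)

lemma limit_least:
  assumes "mono f" and "X \<subseteq> Y" and "f Y \<subseteq> Y"
  shows "limit f X \<subseteq> Y"
proof -
  have "(f ^^ n) X \<subseteq> Y" for n
  proof (induction n)
    case (Suc n)
    then show ?case using monoD[OF assms(1) Suc] assms(3) by simp
  qed (simp add: assms(2))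
  then show ?thesis unfolding limit_def by blast
qed

lemma finite_subset_limit_stage:
  assumes infl: "\<And>Y. Y \<subseteq> f Y" and "finite A" and "A \<subseteq> limit f X"
  shows "\<exists>n. A \<subseteq> (f ^^ n) X"
  using assms(2,3)
proof (induction A rule: finite_induct)
  case (insert x A)
  have chain: "m \<le> n \<Longrightarrow> (f ^^ m) X \<subseteq> (f ^^ n) X" for m n
    using lift_Suc_mono_le[of "\<lambda>n. (f ^^ n) X"] infl by simp
  from insert obtain m n where "x \<in> (f ^^ m) X" "A \<subseteq> (f ^^ n) X"
    unfolding limit_def by blast
  then have "insert x A \<subseteq> (f ^^ max m n) X"
    using chain[of m "max m n"] chain[of n "max m n"] by auto
  then show ?case ..
qed simp

lemma limit_closed:
  assumes "mono f" and "\<And>Y. Y \<subseteq> f Y" and "finite A" and "A \<subseteq> limit f X"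
  shows "f A \<subseteq> limit f X"
proof -
  obtain n where "A \<subseteq> (f ^^ n) X"
    using finite_subset_limit_stage[OF assms(2-4)] by blast
  then have "f A \<subseteq> (f ^^ Suc n) X" using monoD[OF assms(1)] by simp
  then show ?thesis unfolding limit_def by blast
qed

lemma mem_limit_imp_mem_base:
  assumes "\<And>Y. \<forall>x \<in> f Y. P x \<longrightarrow> x \<in> Y" and "x \<in> limit f X" and "P x"
  shows "x \<in> X"
proof -
  obtain n where "x \<in> (f ^^ n) X" using assms(2) unfolding limit_def by blast
  then show ?thesis by (induction n) (use assms(1,3) in auto)
qed

lemma chars_of_simps [simp]:
  "chars_of [] = []" "chars_of (t # p) = snd t @ chars_of p" "chars_of (p @ q) = chars_of p @ chars_of q"
  by (simp_all add: chars_of_def)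

section \<open>Derivation trees\<close>

text \<open>Derivations in tree form: equivalent to derives, but amenable to structural induction.\<close>
inductive generates :: "('a \<times> 'a list) set \<Rightarrow> 'a list \<Rightarrow> 'a list \<Rightarrow> bool" for R where
  generates_Nil: "generates R [] []"
| generates_keep: "generates R \<alpha> w \<Longrightarrow> generates R (X # \<alpha>) (X # w)"
| generates_rule: "(M, \<gamma>) \<in> R \<Longrightarrow> generates R \<gamma> u \<Longrightarrow> generates R \<alpha> w \<Longrightarrow> generates R (M # \<alpha>) (u @ w)"

lemma generates_refl: "generates R \<alpha> \<alpha>"
  by (induction \<alpha>) (auto intro: generates.intros)

lemma generates_append: "generates R \<alpha> u \<Longrightarrow> generates R \<beta> v \<Longrightarrow> generates R (\<alpha> @ \<beta>) (u @ v)"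
proof (induction rule: generates.induct)
  case (generates_rule M \<gamma> u \<alpha> w)
  then show ?case using generates.generates_rule[of M \<gamma> R u "\<alpha> @ \<beta>" "w @ v"] by simp
qed (auto intro: generates.intros)

lemma generates_Nil_iff [simp]: "generates R [] w \<longleftrightarrow> w = []"
  by (auto elim: generates.cases intro: generates_Nil)

lemma generates_Cons_iff:
  "generates R (X # \<alpha>) w \<longleftrightarrow>
     (\<exists>w'. w = X # w' \<and> generates R \<alpha> w') \<or>
     (\<exists>\<gamma> u w'. (X, \<gamma>) \<in> R \<and> generates R \<gamma> u \<and> generates R \<alpha> w' \<and> w = u @ w')"
  by (rule iffI, cases rule: generates.cases) (auto intro: generates.intros)

lemma generates_append_split:
  "generates R (\<alpha> @ \<beta>) w \<Longrightarrow> \<exists>u v. w = u @ v \<and> generates R \<alpha> u \<and> generates R \<beta> v"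
proof (induction \<alpha> arbitrary: w)
  case (Cons X \<alpha>)
  from Cons.prems consider
      (keep) w' where "w = X # w'" "generates R (\<alpha> @ \<beta>) w'"
    | (rule) \<gamma> u w' where "(X, \<gamma>) \<in> R" "generates R \<gamma> u" "generates R (\<alpha> @ \<beta>) w'" "w = u @ w'"
    unfolding append_Cons generates_Cons_iff by blast
  then show ?case
  proof cases
    case keep
    from Cons.IH[OF keep(2)] obtain v1 v2 where "w' = v1 @ v2" "generates R \<alpha> v1" "generates R \<beta> v2"
      by blast
    then show ?thesis using keep(1) by (metis append_Cons generates_keep)
  next
    case rule
    from Cons.IH[OF rule(3)] obtain v1 v2 where "w' = v1 @ v2" "generates R \<alpha> v1" "generates R \<beta> v2"
      by blast
    then have "generates R (X # \<alpha>) (u @ v1)" using rule by (blast intro: generates.generates_rule)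
    then show ?thesis using rule \<open>w' = v1 @ v2\<close> \<open>generates R \<beta> v2\<close>
      by (metis append.assoc)
  qed
qed auto

lemma generates_trans: "generates R \<alpha> \<beta> \<Longrightarrow> generates R \<beta> w \<Longrightarrow> generates R \<alpha> w"
proof (induction arbitrary: w rule: generates.induct)
  case (generates_keep \<alpha> v X)
  from generates_keep.prems consider
      (keep) w' where "w = X # w'" "generates R v w'"
    | (rule) \<gamma> u w' where "(X, \<gamma>) \<in> R" "generates R \<gamma> u" "generates R v w'" "w = u @ w'"
    unfolding generates_Cons_iff by blast
  then show ?case
    by cases (auto intro: generates.intros dest: generates_keep.IH)
next
  case (generates_rule M \<gamma> u \<alpha> v)
  from generates_append_split[OF generates_rule.prems] obtain w1 w2
    where "w = w1 @ w2" "generates R u w1" "generates R v w2" by blast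
  then show ?case using generates_rule by (blast intro: generates.generates_rule)
qed simp

lemma derives_append_context: "derives R \<alpha> \<beta> \<Longrightarrow> derives R (x @ \<alpha> @ y) (x @ \<beta> @ y)"
  unfolding derives_def
proof (induction rule: rtranclp_induct)
  case (step \<beta> \<gamma>)
  have "derives1 R (x @ \<beta> @ y) (x @ \<gamma> @ y)"
    using step.hyps(2) unfolding derives1_def by (metis append.assoc append_Cons)
  then show ?case using step.IH by simp
qed simp

lemma derives_rule: "(N, \<gamma>) \<in> R \<Longrightarrow> derives R (x @ N # y) (x @ \<gamma> @ y)"
  unfolding derives_def derives1_def by (intro r_into_rtranclp) fastforce

lemma derives_trans [trans]: "derives R \<alpha> \<beta> \<Longrightarrow> derives R \<beta> \<gamma> \<Longrightarrow> derives R \<alpha> \<gamma>"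
  unfolding derives_def by simp

lemma generates_imp_derives: "generates R \<alpha> w \<Longrightarrow> derives R \<alpha> w"
proof (induction rule: generates.induct)
  case generates_Nil
  then show ?case by (simp add: derives_def)
next
  case (generates_keep \<alpha> w X)
  then show ?case using derives_append_context[of R \<alpha> w "[X]" "[]"] by simp
next
  case (generates_rule M \<gamma> u \<alpha> w)
  have "derives R (M # \<alpha>) (\<gamma> @ \<alpha>)" using derives_rule[OF generates_rule.hyps(1), of "[]"] by simp
  also have "derives R (\<gamma> @ \<alpha>) (u @ \<alpha>)" using derives_append_context[OF generates_rule.IH(1), of "[]"] by simp
  also have "derives R (u @ \<alpha>) (u @ w)" using derives_append_context[OF generates_rule.IH(2), of u "[]"] by simp
  finally show ?case .
qed

lemma derives_imp_generates: "derives R \<alpha> w \<Longrightarrow> generates R \<alpha> w"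
  unfolding derives_def
proof (induction rule: rtranclp_induct)
  case base
  then show ?case by (rule generates_refl)
next
  case (step \<beta> \<gamma>)
  then obtain x N y \<delta> where \<beta>: "\<beta> = x @ [N] @ y" "\<gamma> = x @ \<delta> @ y" "(N, \<delta>) \<in> R"
    unfolding derives1_def by blast
  have "generates R (N # y) (\<delta> @ y)" by (rule generates_rule[OF \<beta>(3) generates_refl generates_refl])
  then have "generates R \<beta> \<gamma>" using generates_append[OF generates_refl[of R x]] \<beta> by simp
  then show ?case using step.IH generates_trans by blast
qed

lemma derives_lists:
  assumes "derives R \<alpha> \<beta>" and "R \<subseteq> A \<times> lists A" and "\<alpha> \<in> lists A"
  shows "\<beta> \<in> lists A"
  using assms(1,3) unfolding derives_def
proof (induction rule: rtranclp_induct)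
  case (step \<beta> \<gamma>)
  then show ?case unfolding derives1_def by (auto dest!: subsetD[OF assms(2)])
qed

lemma derives_through_rule:
  assumes "derives R [S] (x @ N # \<delta>)" and "(N, \<alpha> @ X # \<beta>) \<in> R" and "generates R \<alpha> w"
  shows "derives R [S] (x @ w @ X # \<beta> @ \<delta>)"
proof -
  note assms(1)
  also have "derives R (x @ N # \<delta>) (x @ \<alpha> @ (X # \<beta> @ \<delta>))"
    using derives_rule[OF assms(2)] by simp
  also have "derives R \<dots> (x @ w @ (X # \<beta> @ \<delta>))"
    using derives_append_context generates_imp_derives[OF assms(3)] by blast
  finally show ?thesis .
qed

section \<open>Admissible paths and valid Earley items\<close>

primrec admissible :: "(nat \<Rightarrow> ('a, 'c) token set) \<Rightarrow> nat \<Rightarrow> ('a, 'c) path \<Rightarrow> bool" where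
  "admissible F j [] = True"
| "admissible F j (t # q) \<longleftrightarrow> t \<in> F j \<and> admissible F (j + length (snd t)) q"

lemma admissible_append [simp]:
  "admissible F j (p @ q) \<longleftrightarrow> admissible F j p \<and> admissible F (j + length (chars_of p)) q"
  by (induction p arbitrary: j) (auto simp: add.assoc)

lemma admissible_mono: "admissible F j p \<Longrightarrow> (\<And>i. F i \<subseteq> G i) \<Longrightarrow> admissible G j p"
  by (induction p arbitrary: j) auto

lemma admissible_restrict:
  "admissible G j p \<Longrightarrow> (\<And>i. i \<le> j + length (chars_of p) \<Longrightarrow> G i \<subseteq> F i) \<Longrightarrow> admissible F j p"
proof (induction p arbitrary: j)
  case (Cons t q)
  have "t \<in> F j" using Cons.prems(1) Cons.prems(2)[of j] by auto
  moreover have "admissible F (j + length (snd t)) q"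
    using Cons.prems by (intro Cons.IH) (auto simp: add.assoc)
  ultimately show ?case by simp
qed simp

lemma admissible_Nil_family [simp]: "admissible (\<lambda>_. {}) j p \<longleftrightarrow> p = []"
  by (cases p) auto

lemma admissible_terminals:
  "admissible F j p \<Longrightarrow> (\<And>i t. t \<in> F i \<Longrightarrow> fst t \<in> TT) \<Longrightarrow> map fst p \<in> lists TT"
  by (induction p arbitrary: j) auto

lemma admissible_Union_chain:
  fixes G :: "nat \<Rightarrow> nat \<Rightarrow> ('a, 'c) token set"
  assumes "\<And>i. mono (\<lambda>u. G u i)" and "admissible (\<lambda>i. \<Union>u. G u i) j p"
  shows "\<exists>u. admissible (G u) j p"
  using assms(2)
proof (induction p arbitrary: j)
  case (Cons t q)
  from Cons.prems obtain u1 where u1: "t \<in> G u1 j" by auto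
  from Cons.prems Cons.IH obtain u2 where u2: "admissible (G u2) (j + length (snd t)) q" by auto
  have "t \<in> G (max u1 u2) j" using u1 monoD[OF assms(1), of u1 "max u1 u2"] by auto
  moreover have "admissible (G (max u1 u2)) (j + length (snd t)) q"
    using u2 by (rule admissible_mono) (rule monoD[OF assms(1)], simp)
  ultimately have "admissible (G (max u1 u2)) j (t # q)" by simp
  then show ?case ..
qed simp

text \<open>The items derivable by Earley's rules when the tokens starting at position j are F j
  and positions up to k may be used for prediction, completion and scanning.\<close>
inductive valid_item :: "('a \<times> 'a list) set \<Rightarrow> 'a \<Rightarrow> (nat \<Rightarrow> ('a, 'c) token set) \<Rightarrow> nat
    \<Rightarrow> 'a \<Rightarrow> 'a list \<Rightarrow> 'a list \<Rightarrow> nat \<Rightarrow> nat \<Rightarrow> bool" for R S F k where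
  valid_Init: "(S, \<alpha>) \<in> R \<Longrightarrow> valid_item R S F k S [] \<alpha> 0 0"
| valid_Predict: "valid_item R S F k N \<alpha> (M # \<beta>) i j \<Longrightarrow> j \<le> k \<Longrightarrow> (M, \<gamma>) \<in> R
    \<Longrightarrow> valid_item R S F k M [] \<gamma> j j"
| valid_Complete: "valid_item R S F k N \<alpha> (M # \<beta>) i j \<Longrightarrow> valid_item R S F k M \<gamma> [] j l \<Longrightarrow> l \<le> k
    \<Longrightarrow> valid_item R S F k N (\<alpha> @ [M]) \<beta> i l"
| valid_Scan: "valid_item R S F k N \<alpha> (X # \<beta>) i j \<Longrightarrow> j \<le> k \<Longrightarrow> (X, c) \<in> F j
    \<Longrightarrow> valid_item R S F k N (\<alpha> @ [X]) \<beta> i (j + length c)"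

lemma valid_item_start_le_end: "valid_item R S F k N \<alpha> \<beta> i j \<Longrightarrow> i \<le> j"
  by (induction rule: valid_item.induct) auto

lemma valid_item_mono:
  "valid_item R S F k N \<alpha> \<beta> i j \<Longrightarrow> (\<And>j. F j \<subseteq> G j) \<Longrightarrow> k \<le> k' \<Longrightarrow> valid_item R S G k' N \<alpha> \<beta> i j"
proof (induction rule: valid_item.induct)
  case (valid_Scan N \<alpha> X \<beta> i j c)
  then have "valid_item R S G k' N \<alpha> (X # \<beta>) i j" "j \<le> k'" "(X, c) \<in> G j" by auto
  then show ?case by (rule valid_item.valid_Scan)
qed (auto intro: valid_item.intros)

lemma valid_item_sound:
  "valid_item R S F k N \<alpha> \<beta> i j \<Longrightarrow> (N, \<alpha> @ \<beta>) \<in> R \<and>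
     (\<exists>p q \<delta>. admissible F 0 (p @ q) \<and> length (chars_of p) = i \<and> length (chars_of (p @ q)) = j \<and>
        derives R [S] (map fst p @ N # \<delta>) \<and> generates R \<alpha> (map fst q))"
proof (induction rule: valid_item.induct)
  case (valid_Init \<alpha>)
  then show ?case by (auto intro!: exI[of _ "[]"] simp: derives_def)
next
  case (valid_Predict N \<alpha> M \<beta> i j \<gamma>)
  then obtain p q \<delta> where rule: "(N, \<alpha> @ M # \<beta>) \<in> R"
    and q: "admissible F 0 (p @ q)" "length (chars_of (p @ q)) = j" "generates R \<alpha> (map fst q)"
    and p: "derives R [S] (map fst p @ N # \<delta>)" by blast
  have "derives R [S] (map fst (p @ q) @ M # \<beta> @ \<delta>)"
    using derives_through_rule[OF p rule q(3)] by simp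
  then have "admissible F 0 ((p @ q) @ []) \<and> length (chars_of (p @ q)) = j \<and>
      length (chars_of ((p @ q) @ [])) = j \<and> derives R [S] (map fst (p @ q) @ M # \<beta> @ \<delta>) \<and>
      generates R [] (map fst [])"
    using q by simp
  then show ?case using valid_Predict.hyps(3) by (simp only: append_Nil) blast
next
  case (valid_Complete N \<alpha> M \<beta> i j \<gamma> l)
  from valid_Complete.IH(1) obtain p q \<delta> where rule: "(N, \<alpha> @ M # \<beta>) \<in> R"
    and pq: "admissible F 0 (p @ q)" "length (chars_of p) = i" "length (chars_of (p @ q)) = j"
      "derives R [S] (map fst p @ N # \<delta>)" "generates R \<alpha> (map fst q)" by blast
  from valid_Complete.IH(2) obtain p' q' where rule': "(M, \<gamma>) \<in> R"
    and pq': "admissible F 0 (p' @ q')" "length (chars_of p') = j" "length (chars_of (p' @ q')) = l"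
      "generates R \<gamma> (map fst q')" by auto
  have "generates R (\<alpha> @ [M]) (map fst q @ map fst q' @ [])"
    using generates_append[OF pq(5) generates_rule[OF rule' pq'(4) generates_Nil]] .
  moreover have "admissible F 0 (p @ q @ q')" using pq pq' by simp
  ultimately show ?case using rule pq pq' by (intro conjI exI[of _ p] exI[of _ "q @ q'"]) auto
next
  case (valid_Scan N \<alpha> X \<beta> i j c)
  then obtain p q \<delta> where rule: "(N, \<alpha> @ X # \<beta>) \<in> R"
    and pq: "admissible F 0 (p @ q)" "length (chars_of p) = i" "length (chars_of (p @ q)) = j"
      "derives R [S] (map fst p @ N # \<delta>)" "generates R \<alpha> (map fst q)" by blast
  have "generates R (\<alpha> @ [X]) (map fst (q @ [(X, c)]))"
    using generates_append[OF pq(5) generates_keep[OF generates_Nil]] by simp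
  moreover have "admissible F 0 (p @ q @ [(X, c)])" using pq valid_Scan.hyps by simp
  ultimately show ?case using rule pq by (intro conjI exI[of _ p] exI[of _ "q @ [(X, c)]"]) auto
qed

lemma valid_item_advance:
  assumes "generates R \<beta> (map fst q)" and "valid_item R S F k N \<alpha> (\<beta> @ \<gamma>) i j"
    and "admissible F j q" and "j + length (chars_of q) \<le> k"
  shows "valid_item R S F k N (\<alpha> @ \<beta>) \<gamma> i (j + length (chars_of q))"
  using assms
proof (induction \<beta> "map fst q" arbitrary: N \<alpha> \<gamma> i j q rule: generates.induct)
  case generates_Nil
  then show ?case by simp
next
  case (generates_keep \<beta> w X)
  then obtain c q' where q: "q = (X, c) # q'" "w = map fst q'" by (auto simp: Cons_eq_map_conv)
  have scanned: "valid_item R S F k N (\<alpha> @ [X]) (\<beta> @ \<gamma>) i (j + length c)"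
    using valid_Scan[of R S F k N \<alpha> X "\<beta> @ \<gamma>" i j c] generates_keep.prems q by simp
  moreover have "admissible F (j + length c) q'" "j + length c + length (chars_of q') \<le> k"
    using generates_keep.prems q by auto
  ultimately have "valid_item R S F k N ((\<alpha> @ [X]) @ \<beta>) \<gamma> i (j + length c + length (chars_of q'))"
    by (rule generates_keep.hyps(2)[OF q(2)])
  then show ?case using q by (simp add: add.assoc)
next
  case (generates_rule M \<delta> u \<beta> w)
  from generates_rule.hyps(6) obtain q1 q2 where q: "q = q1 @ q2" "u = map fst q1" "w = map fst q2"
    by (metis map_eq_append_conv)
  have item: "valid_item R S F k N \<alpha> (M # \<beta> @ \<gamma>) i j" using generates_rule.prems(1) by simp
  have "j \<le> k" using generates_rule.prems(3) by simp
  then have "valid_item R S F k M [] (\<delta> @ []) j j"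
    using valid_Predict[OF item _ generates_rule.hyps(1)] by simp
  moreover have "admissible F j q1" "j + length (chars_of q1) \<le> k"
    using generates_rule.prems(2,3) q(1) by auto
  ultimately have "valid_item R S F k M ([] @ \<delta>) [] j (j + length (chars_of q1))"
    by (rule generates_rule.hyps(3)[OF q(2)])
  then have completed: "valid_item R S F k N (\<alpha> @ [M]) (\<beta> @ \<gamma>) i (j + length (chars_of q1))"
    using valid_Complete[OF item] generates_rule.prems(3) q(1) by simp
  have "admissible F (j + length (chars_of q1)) q2"
    "j + length (chars_of q1) + length (chars_of q2) \<le> k"
    using generates_rule.prems(2,3) q(1) by auto
  with completed have "valid_item R S F k N ((\<alpha> @ [M]) @ \<beta>) \<gamma> i (j + length (chars_of q1) + length (chars_of q2))"
    by (rule generates_rule.hyps(5)[OF q(3)])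
  then show ?case using q(1) by (simp add: add.assoc)
qed

lemma valid_item_complete_generated:
  assumes "valid_item R S F k N \<alpha> (M # \<beta>) i j" and "(M, \<delta>) \<in> R" and "generates R \<delta> (map fst q)"
    and "admissible F j q" and "j + length (chars_of q) \<le> k"
  shows "valid_item R S F k N (\<alpha> @ [M]) \<beta> i (j + length (chars_of q))"
proof (rule valid_item_advance)
  show "generates R [M] (map fst q)"
    using generates_rule[OF assms(2,3) generates_Nil] by simp
qed (use assms in simp_all)

lemma valid_item_before_symbol:
  assumes "generates R \<beta> (map fst q @ X # \<omega>)" and "valid_item R S F k N \<alpha> (\<beta> @ \<gamma>) i j"
    and "admissible F j q" and "j + length (chars_of q) \<le> k"
  shows "\<exists>N' \<alpha>' \<beta>' i'. valid_item R S F k N' \<alpha>' (X # \<beta>') i' (j + length (chars_of q))"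
  using assms
proof (induction \<beta> "map fst q @ X # \<omega>" arbitrary: N \<alpha> \<gamma> i j q \<omega> rule: generates.induct)
  case generates_Nil
  then show ?case by simp
next
  case (generates_keep \<beta> w Y)
  show ?case
  proof (cases q)
    case Nil
    then show ?thesis using generates_keep.hyps(3) generates_keep.prems(1) by auto
  next
    case (Cons t q')
    obtain c where t: "t = (Y, c)" and w: "w = map fst q' @ X # \<omega>"
      using generates_keep.hyps(3) Cons by (cases t) auto
    have "valid_item R S F k N (\<alpha> @ [Y]) (\<beta> @ \<gamma>) i (j + length c)"
      using valid_Scan[of R S F k N \<alpha> Y "\<beta> @ \<gamma>" i j c] generates_keep.prems Cons t by simp
    moreover have "admissible F (j + length c) q'" "j + length c + length (chars_of q') \<le> k"
      using generates_keep.prems(2,3) Cons t by auto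
    ultimately have "\<exists>N' \<alpha>' \<beta>' i'.
        valid_item R S F k N' \<alpha>' (X # \<beta>') i' (j + length c + length (chars_of q'))"
      by (rule generates_keep.hyps(2)[OF w])
    then show ?thesis using Cons t by (simp add: add.assoc)
  qed
next
  case (generates_rule M \<delta> u \<beta> w)
  have item: "valid_item R S F k N \<alpha> (M # \<beta> @ \<gamma>) i j" using generates_rule.prems(1) by simp
  have "j \<le> k" using generates_rule.prems(3) by simp
  then have predicted: "valid_item R S F k M [] (\<delta> @ []) j j"
    using valid_Predict[OF item _ generates_rule.hyps(1)] by simp
  have completed: "valid_item R S F k N (\<alpha> @ [M]) (\<beta> @ \<gamma>) i (j + length (chars_of q1))"
    if "q = q1 @ q2" "u = map fst q1" for q1 q2
    using valid_item_complete_generated[OF item generates_rule.hyps(1) generates_rule.hyps(2)[unfolded that(2)]]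
      generates_rule.prems(2,3) that(1) by simp
  from generates_rule.hyps(6) obtain us where
    "u = map fst q @ us \<and> us @ w = X # \<omega> \<or> u @ us = map fst q \<and> w = us @ X # \<omega>"
    by (auto simp: append_eq_append_conv2)
  then consider
      (inside) \<omega>' where "u = map fst q @ X # \<omega>'"
    | (boundary) "u = map fst q" "w = X # \<omega>"
    | (after) us where "u @ us = map fst q" "w = us @ X # \<omega>"
    by (cases us) auto
  then show ?case
  proof cases
    case inside
    then show ?thesis using generates_rule.hyps(3)[OF inside predicted] generates_rule.prems(2,3) by blast
  next
    case boundary
    have "valid_item R S F k N (\<alpha> @ [M]) (\<beta> @ \<gamma>) i (j + length (chars_of q))"
      using completed[of q "[]"] boundary by simp
    then show ?thesis
      using generates_rule.hyps(5)[of "[]" \<omega>] boundary generates_rule.prems(3) by simp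
  next
    case after
    then obtain q1 q2 where after: "q = q1 @ q2" "u = map fst q1" "w = map fst q2 @ X # \<omega>"
      by (metis map_eq_append_conv)
    have "admissible F (j + length (chars_of q1)) q2"
      "j + length (chars_of q1) + length (chars_of q2) \<le> k"
      using generates_rule.prems(2,3) after(1) by auto
    then show ?thesis
      using generates_rule.hyps(5)[OF after(3) completed[OF after(1,2)]] after(1) by (simp add: add.assoc)
  qed
qed

section \<open>The Earley closure\<close>

lemma mono_Predict: "mono (Predict R k)"
  unfolding Predict_def by (rule monoI) blast

lemma mono_Complete: "mono (Complete k)"
  unfolding Complete_def by (rule monoI) blast

lemma mono_Scan: "mono (Scan T k)"
  unfolding Scan_def by (rule monoI) blast

lemma mono_Earley_step: "mono (Scan T k \<circ> Complete k \<circ> Predict R k)"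
proof (rule monoI)
  fix A B :: "'a item set"
  assume "A \<subseteq> B"
  then show "(Scan T k \<circ> Complete k \<circ> Predict R k) A \<subseteq> (Scan T k \<circ> Complete k \<circ> Predict R k) B"
    unfolding comp_apply by (intro monoD[OF mono_Scan] monoD[OF mono_Complete] monoD[OF mono_Predict])
qed

lemma Earley_step_inflationary: "I \<subseteq> (Scan T k \<circ> Complete k \<circ> Predict R k) I"
  by (auto simp: Scan_def Complete_def Predict_def)

lemma subset_pi: "I \<subseteq> pi R k T I"
  unfolding pi_def by (rule subset_limit)

lemma pi_closed:
  "finite A \<Longrightarrow> A \<subseteq> pi R k T I \<Longrightarrow> (Scan T k \<circ> Complete k \<circ> Predict R k) A \<subseteq> pi R k T I"
  unfolding pi_def by (rule limit_closed[OF mono_Earley_step Earley_step_inflationary])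

lemma pi_Predict:
  assumes "Item N \<alpha> (M # \<beta>) i k \<in> pi R k T I" and "(M, \<gamma>) \<in> R"
  shows "Item M [] \<gamma> k k \<in> pi R k T I"
proof -
  have "Item M [] \<gamma> k k \<in> (Scan T k \<circ> Complete k \<circ> Predict R k) {Item N \<alpha> (M # \<beta>) i k}"
    using assms(2) by (auto simp: Scan_def Complete_def Predict_def)
  then show ?thesis using pi_closed assms(1) by blast
qed

lemma pi_Complete:
  assumes "Item N \<alpha> (M # \<beta>) i j \<in> pi R k T I" and "Item M \<gamma> [] j k \<in> pi R k T I"
  shows "Item N (\<alpha> @ [M]) \<beta> i k \<in> pi R k T I"
proof -
  have "Item N (\<alpha> @ [M]) \<beta> i k
      \<in> (Scan T k \<circ> Complete k \<circ> Predict R k) {Item N \<alpha> (M # \<beta>) i j, Item M \<gamma> [] j k}"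
    by (auto simp: Scan_def Complete_def Predict_def)
  then show ?thesis using pi_closed[of "{Item N \<alpha> (M # \<beta>) i j, Item M \<gamma> [] j k}"] assms by blast
qed

lemma pi_Scan:
  assumes "Item N \<alpha> (X # \<beta>) i k \<in> pi R k T I" and "(X, c) \<in> T"
  shows "Item N (\<alpha> @ [X]) \<beta> i (k + length c) \<in> pi R k T I"
proof -
  have "Item N (\<alpha> @ [X]) \<beta> i (k + length c) \<in> (Scan T k \<circ> Complete k \<circ> Predict R k) {Item N \<alpha> (X # \<beta>) i k}"
    using assms(2) by (auto simp: Scan_def Complete_def Predict_def)
  then show ?thesis using pi_closed assms(1) by blast
qed

lemma pi_ending_before:
  assumes "Item N \<alpha> \<beta> i j \<in> pi R k T I" and "j < k"
  shows "Item N \<alpha> \<beta> i j \<in> I"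
proof (rule mem_limit_imp_mem_base[where P = "case_item (\<lambda>_ _ _ _ j. j < k)"])
  show "\<forall>x \<in> (Scan T k \<circ> Complete k \<circ> Predict R k) Y. case_item (\<lambda>_ _ _ _ j. j < k) x \<longrightarrow> x \<in> Y" for Y
    by (auto simp: Scan_def Complete_def Predict_def)
  show "Item N \<alpha> \<beta> i j \<in> limit (Scan T k \<circ> Complete k \<circ> Predict R k) I"
    using assms(1) unfolding pi_def .
qed (use assms(2) in simp)

lemma pi_least:
  assumes "I \<subseteq> Y" and "Predict R k Y \<subseteq> Y" and "Complete k Y \<subseteq> Y" and "Scan T k Y \<subseteq> Y"
  shows "pi R k T I \<subseteq> Y"
proof -
  have "Predict R k Y = Y" using assms(2) unfolding Predict_def by blast
  moreover have "Complete k Y = Y" using assms(3) unfolding Complete_def by blast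
  moreover have "Scan T k Y = Y" using assms(4) unfolding Scan_def by blast
  ultimately have "(Scan T k \<circ> Complete k \<circ> Predict R k) Y \<subseteq> Y" by simp
  then show ?thesis unfolding pi_def by (rule limit_least[OF mono_Earley_step assms(1)])
qed

definition valid_items :: "('a \<times> 'a list) set \<Rightarrow> 'a \<Rightarrow> (nat \<Rightarrow> ('a, 'c) token set) \<Rightarrow> nat \<Rightarrow> 'a item set" where
  "valid_items R S F k = {Item N \<alpha> \<beta> i j | N \<alpha> \<beta> i j. valid_item R S F k N \<alpha> \<beta> i j}"

lemma mem_valid_items_iff [simp]: "Item N \<alpha> \<beta> i j \<in> valid_items R S F k \<longleftrightarrow> valid_item R S F k N \<alpha> \<beta> i j"
  by (simp add: valid_items_def)

lemma valid_items_subsetI: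
  "(\<And>N \<alpha> \<beta> i j. valid_item R S F k N \<alpha> \<beta> i j \<Longrightarrow> Item N \<alpha> \<beta> i j \<in> I) \<Longrightarrow> valid_items R S F k \<subseteq> I"
  unfolding valid_items_def by blast

lemma valid_items_mono:
  "(\<And>j. F j \<subseteq> G j) \<Longrightarrow> k \<le> k' \<Longrightarrow> valid_items R S F k \<subseteq> valid_items R S G k'"
  by (rule valid_items_subsetI) (auto intro: valid_item_mono)

text \<open>Items ending before k are taken from B, which must therefore already be closed under
  Earley's rules there; items ending at k are produced by the closure itself.\<close>
lemma valid_item_in_pi:
  assumes Init: "\<And>\<alpha>. (S, \<alpha>) \<in> R \<Longrightarrow> Item S [] \<alpha> 0 0 \<in> pi R k T B"
    and Predict: "\<And>N \<alpha> M \<beta> i j \<gamma>. Item N \<alpha> (M # \<beta>) i j \<in> B \<Longrightarrow> j < k \<Longrightarrow> (M, \<gamma>) \<in> R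
      \<Longrightarrow> Item M [] \<gamma> j j \<in> B"
    and Complete: "\<And>N \<alpha> M \<beta> i j \<gamma> l. Item N \<alpha> (M # \<beta>) i j \<in> B \<Longrightarrow> Item M \<gamma> [] j l \<in> B \<Longrightarrow> l < k
      \<Longrightarrow> Item N (\<alpha> @ [M]) \<beta> i l \<in> B"
    and Scan: "\<And>N \<alpha> X \<beta> i j c. Item N \<alpha> (X # \<beta>) i j \<in> B \<Longrightarrow> j < k \<Longrightarrow> (X, c) \<in> F j
      \<Longrightarrow> Item N (\<alpha> @ [X]) \<beta> i (j + length c) \<in> B"
    and tokens: "F k \<subseteq> T"
  shows "valid_item R S F k N \<alpha> \<beta> i j \<Longrightarrow> Item N \<alpha> \<beta> i j \<in> pi R k T B"
proof (induction rule: valid_item.induct)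
  case (valid_Init \<alpha>)
  then show ?case by (rule Init)
next
  case (valid_Predict N \<alpha> M \<beta> i j \<gamma>)
  show ?case
  proof (cases "j < k")
    case True
    then show ?thesis
      using Predict[OF pi_ending_before[OF valid_Predict.IH] _ valid_Predict.hyps(3)] subset_pi by blast
  next
    case False
    then show ?thesis using pi_Predict[OF _ valid_Predict.hyps(3)] valid_Predict by simp
  qed
next
  case (valid_Complete N \<alpha> M \<beta> i j \<gamma> l)
  show ?case
  proof (cases "l < k")
    case True
    moreover have "j \<le> l" using valid_item_start_le_end[OF valid_Complete.hyps(2)] .
    ultimately show ?thesis
      using Complete[OF pi_ending_before[OF valid_Complete.IH(1)] pi_ending_before[OF valid_Complete.IH(2)]]
        subset_pi by fastforce
  next
    case False
    then show ?thesis using pi_Complete valid_Complete by simp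
  qed
next
  case (valid_Scan N \<alpha> X \<beta> i j c)
  show ?case
  proof (cases "j < k")
    case True
    then show ?thesis
      using Scan[OF pi_ending_before[OF valid_Scan.IH] _ valid_Scan.hyps(3)] subset_pi by blast
  next
    case False
    then show ?thesis using pi_Scan[OF _ subsetD[OF tokens]] valid_Scan by simp
  qed
qed

lemma pi_subset_valid_items:
  assumes "B \<subseteq> valid_items R S F k" and "T \<subseteq> F k"
  shows "pi R k T B \<subseteq> valid_items R S F k"
proof (rule pi_least[OF assms(1)])
  show "Predict R k (valid_items R S F k) \<subseteq> valid_items R S F k"
    unfolding Predict_def by (auto intro: valid_Predict)
  show "Complete k (valid_items R S F k) \<subseteq> valid_items R S F k"
    unfolding Complete_def by (auto intro: valid_Complete)
  show "Scan T k (valid_items R S F k) \<subseteq> valid_items R S F k"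
    unfolding Scan_def using assms(2) by (fastforce intro: valid_Scan)
qed

lemma pi_valid_items_update:
  assumes "F k \<subseteq> T"
  shows "pi R k T (valid_items R S F k) = valid_items R S (F(k := T)) k"
proof
  have "valid_items R S F k \<subseteq> valid_items R S (F(k := T)) k"
    by (rule valid_items_mono) (use assms in auto)
  then show "pi R k T (valid_items R S F k) \<subseteq> valid_items R S (F(k := T)) k"
    by (rule pi_subset_valid_items) simp
  show "valid_items R S (F(k := T)) k \<subseteq> pi R k T (valid_items R S F k)"
  proof (rule valid_items_subsetI, rule valid_item_in_pi)
    show "Item S [] \<alpha> 0 0 \<in> pi R k T (valid_items R S F k)" if "(S, \<alpha>) \<in> R" for \<alpha>
      using subset_pi valid_Init[OF that] by fastforce
  qed (auto intro: valid_item.intros)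
qed

lemma pi_Init_eq_valid_items:
  "pi R 0 ({} :: ('a, 'c) token set) (Init R S) = valid_items R S (\<lambda>_. {} :: ('a, 'c) token set) 0"
  (is "?pi = ?valid")
proof
  show "?pi \<subseteq> ?valid"
    by (rule pi_subset_valid_items) (auto simp: Init_def intro: valid_Init)
  show "?valid \<subseteq> ?pi"
    by (rule valid_items_subsetI, rule valid_item_in_pi) (auto simp: Init_def intro: subsetD[OF subset_pi])
qed

lemma pi_Union_valid_items:
  fixes G :: "nat \<Rightarrow> nat \<Rightarrow> ('a, 'c) token set"
  assumes chain: "\<And>j. mono (\<lambda>u. G u j)" and F_eq: "\<And>j. j \<le> k \<Longrightarrow> F j = (\<Union>u. G u j)"
    and G_le: "\<And>u j. G u j \<subseteq> F j" and F_Suc: "F (Suc k) = {}"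
  shows "pi R (Suc k) ({} :: ('a, 'c) token set) (\<Union>u. valid_items R S (G u) k) = valid_items R S F (Suc k)"
    (is "?pi = ?valid")
proof
  have "valid_items R S (G u) k \<subseteq> ?valid" for u
    by (rule valid_items_mono[OF G_le]) simp
  then show "?pi \<subseteq> ?valid"
    by (intro pi_subset_valid_items) auto
  have lift: "valid_item R S (G v) k N \<alpha> \<beta> i j" if "valid_item R S (G u) k N \<alpha> \<beta> i j" "u \<le> v"
    for u v N \<alpha> \<beta> i j
    using valid_item_mono[OF that(1) monoD[OF chain that(2)]] by simp
  let ?B = "\<Union>u. valid_items R S (G u) k"
  show "?valid \<subseteq> ?pi"
  proof (rule valid_items_subsetI, rule valid_item_in_pi)
    show "Item S [] \<alpha> 0 0 \<in> ?pi" if "(S, \<alpha>) \<in> R" for \<alpha>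
      using subset_pi valid_Init[OF that, of "G 0" k] by fastforce
    show "Item M [] \<gamma> j j \<in> ?B" if "Item N \<alpha> (M # \<beta>) i j \<in> ?B" "j < Suc k" "(M, \<gamma>) \<in> R"
      for N \<alpha> M \<beta> i j \<gamma>
      using that valid_Predict by fastforce
    show "Item N (\<alpha> @ [M]) \<beta> i l \<in> ?B"
      if "Item N \<alpha> (M # \<beta>) i j \<in> ?B" "Item M \<gamma> [] j l \<in> ?B" "l < Suc k" for N \<alpha> M \<beta> i j \<gamma> l
    proof -
      from that(1,2) obtain u1 u2 where "valid_item R S (G u1) k N \<alpha> (M # \<beta>) i j"
        "valid_item R S (G u2) k M \<gamma> [] j l" by auto
      then have "valid_item R S (G (max u1 u2)) k N (\<alpha> @ [M]) \<beta> i l"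
        using valid_Complete[OF lift lift] that(3) by simp
      then show ?thesis by auto
    qed
    show "Item N (\<alpha> @ [X]) \<beta> i (j + length c) \<in> ?B"
      if "Item N \<alpha> (X # \<beta>) i j \<in> ?B" "j < Suc k" "(X, c) \<in> F j" for N \<alpha> X \<beta> i j c
    proof -
      from that obtain u1 u2 where "valid_item R S (G u1) k N \<alpha> (X # \<beta>) i j" "(X, c) \<in> G u2 j"
        using F_eq[of j] by auto
      moreover have "G u2 j \<subseteq> G (max u1 u2) j" by (rule monoD[OF chain]) simp
      ultimately have "valid_item R S (G (max u1 u2)) k N (\<alpha> @ [X]) \<beta> i (j + length c)"
        using valid_Scan[OF lift] that(2) by auto
      then show ?thesis by auto
    qed
  qed (simp add: F_Suc)
qed

section \<open>Path sets of the local-lexing semantics\<close>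

definition admissible_paths :: "'a list set \<Rightarrow> (nat \<Rightarrow> ('a, 'c) token set) \<Rightarrow> ('a, 'c) path set" where
  "admissible_paths L F = {p. terms_of p \<in> L \<and> admissible F 0 p}"

lemma admissible_paths_empty_family: "[] \<in> L \<Longrightarrow> admissible_paths L (\<lambda>_. {}) = {[]}"
  by (auto simp: admissible_paths_def terms_of_def)

lemma admissible_paths_Union_chain:
  fixes G :: "nat \<Rightarrow> nat \<Rightarrow> ('a, 'c) token set"
  assumes "\<And>j. mono (\<lambda>u. G u j)"
  shows "admissible_paths L (\<lambda>j. \<Union>u. G u j) = (\<Union>u. admissible_paths L (G u))"
proof
  show "admissible_paths L (\<lambda>j. \<Union>u. G u j) \<subseteq> (\<Union>u. admissible_paths L (G u))"
    using admissible_Union_chain[OF assms] by (auto simp: admissible_paths_def)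
  show "(\<Union>u. admissible_paths L (G u)) \<subseteq> admissible_paths L (\<lambda>j. \<Union>u. G u j)"
    by (auto simp: admissible_paths_def elim!: admissible_mono)
qed

lemma mono_Append: "mono (Append L k T)"
  unfolding Append_def by (rule monoI) blast

lemma Append_inflationary: "P \<subseteq> Append L k T P"
  unfolding Append_def by blast

lemma admissible_path_in_limit_Append:
  assumes prefix_closed: "\<And>w v. w @ v \<in> L \<Longrightarrow> w \<in> L"
    and empty_beyond: "\<And>j. k < j \<Longrightarrow> F j = {}"
    and "p \<in> admissible_paths L (F(k := T))"
  shows "p \<in> limit (Append L k T) (admissible_paths L F)"
  using assms(3)
proof (induction p rule: rev_induct)
  case Nil
  then show ?case using subset_limit by (fastforce simp: admissible_paths_def)
next
  case (snoc t p)
  from snoc.prems have tp: "terms_of (p @ [t]) \<in> L" and "admissible (F(k := T)) 0 (p @ [t])"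
    unfolding admissible_paths_def by simp_all
  then have admissible_p: "admissible (F(k := T)) 0 p" and t: "t \<in> (F(k := T)) (length (chars_of p))"
    by (simp_all del: fun_upd_apply)
  have "terms_of p \<in> L" using tp prefix_closed by (simp add: terms_of_def)
  with admissible_p have p: "p \<in> limit (Append L k T) (admissible_paths L F)"
    using snoc.IH unfolding admissible_paths_def by blast
  show ?case
  proof (cases "length (chars_of p) = k")
    case True
    then have "p @ [t] \<in> Append L k T {p}"
      using t tp unfolding Append_def by (cases t) simp
    then show ?thesis using limit_closed[OF mono_Append Append_inflationary, of "{p}"] p by blast
  next
    case False
    then have "t \<in> F (length (chars_of p))" using t by simp
    then have "length (chars_of p) < k" using False empty_beyond by (metis empty_iff linorder_neqE_nat)
    then have "admissible F 0 (p @ [t])"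
      using t admissible_p by (auto intro: admissible_restrict)
    then show ?thesis using tp subset_limit by (fastforce simp: admissible_paths_def)
  qed
qed

lemma limit_Append_admissible_paths:
  assumes prefix_closed: "\<And>w v. w @ v \<in> L \<Longrightarrow> w \<in> L"
    and empty_beyond: "\<And>j. k < j \<Longrightarrow> F j = {}" and "F k \<subseteq> T"
  shows "limit (Append L k T) (admissible_paths L F) = admissible_paths L (F(k := T))"
proof
  have "admissible_paths L F \<subseteq> admissible_paths L (F(k := T))"
    using assms(3) by (auto simp: admissible_paths_def elim!: admissible_mono)
  moreover have "Append L k T (admissible_paths L (F(k := T))) \<subseteq> admissible_paths L (F(k := T))"
    by (auto simp: Append_def admissible_paths_def)
  ultimately show "limit (Append L k T) (admissible_paths L F) \<subseteq> admissible_paths L (F(k := T))"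
    by (rule limit_least[OF mono_Append])
  show "admissible_paths L (F(k := T)) \<subseteq> limit (Append L k T) (admissible_paths L F)"
  proof
    fix p
    assume "p \<in> admissible_paths L (F(k := T))"
    with prefix_closed empty_beyond show "p \<in> limit (Append L k T) (admissible_paths L F)"
      by (rule admissible_path_in_limit_Append)
  qed
qed

lemma Lprefix_prefix: "w @ v \<in> Lprefix NN TT R S \<Longrightarrow> w \<in> Lprefix NN TT R S"
  unfolding Lprefix_def by (auto intro!: bexI[of _ "v @ _"])

lemma derives_from_start:
  assumes "derives R [S] w" and "w \<noteq> [S]"
  shows "\<exists>\<gamma>. (S, \<gamma>) \<in> R \<and> generates R \<gamma> w"
  using assms derives_imp_generates[OF assms(1)] by (auto simp: generates_Cons_iff)

locale local_lexing_grammar =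
  fixes NN TT :: "'a set" and R :: "('a \<times> 'a list) set" and S :: 'a
    and Lex :: "'a \<Rightarrow> 'c list \<Rightarrow> nat \<Rightarrow> ('a, 'c) token set"
    and Sel :: "('a, 'c) token set \<Rightarrow> ('a, 'c) token set \<Rightarrow> ('a, 'c) token set"
    and D :: "'c list"
  assumes cfg: "is_cfg NN TT R S" and lexing: "is_local_lexing TT Lex Sel"
begin

abbreviation Lp :: "'a list set" where
  "Lp \<equiv> Lprefix NN TT R S"

lemma Sel_bounds: "A \<subseteq> B \<Longrightarrow> A \<subseteq> Sel A B \<and> Sel A B \<subseteq> B"
  using lexing unfolding is_local_lexing_def by blast

lemma Lex_terminal: "X \<in> TT \<Longrightarrow> k \<le> length D \<Longrightarrow> x \<in> Lex X D k \<Longrightarrow> fst x = X"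
  using lexing unfolding is_local_lexing_def by blast

lemma start_not_terminal: "S \<notin> TT"
  using cfg unfolding is_cfg_def by blast

lemma derives_start_lists: "derives R [S] \<beta> \<Longrightarrow> \<beta> \<in> lists (NN \<union> TT)"
proof (rule derives_lists)
  show "R \<subseteq> (NN \<union> TT) \<times> lists (NN \<union> TT)" "[S] \<in> lists (NN \<union> TT)"
    using cfg unfolding is_cfg_def by auto
qed

lemma Lprefix_Nil: "[] \<in> Lp"
  using cfg unfolding Lprefix_def is_cfg_def by (auto simp: derives_def)

lemma expecting_terminal_imp_Lprefix:
  assumes terminals: "\<And>j t. t \<in> F j \<Longrightarrow> fst t \<in> TT" and "X \<in> TT"
    and "valid_item R S F k N \<alpha> (X # \<beta>) i j"
  shows "\<exists>p \<in> admissible_paths Lp F. length (chars_of p) = j \<and> terms_of p @ [X] \<in> Lp"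
proof -
  from valid_item_sound[OF assms(3)] obtain p q \<delta> where rule: "(N, \<alpha> @ X # \<beta>) \<in> R"
    and pq: "admissible F 0 (p @ q)" "length (chars_of (p @ q)) = j"
      "derives R [S] (map fst p @ N # \<delta>)" "generates R \<alpha> (map fst q)" by blast
  have derivation: "derives R [S] ((map fst (p @ q) @ [X]) @ \<beta> @ \<delta>)"
    using derives_through_rule[OF pq(3) rule pq(4)] by simp
  have "\<beta> @ \<delta> \<in> lists (NN \<union> TT)" using derives_start_lists[OF derivation] by simp
  moreover have "map fst (p @ q) @ [X] \<in> lists TT"
    using admissible_terminals[OF pq(1) terminals] assms(2) by simp
  ultimately have "terms_of (p @ q) @ [X] \<in> Lp"
    using derivation unfolding Lprefix_def terms_of_def by blast
  moreover then have "p @ q \<in> admissible_paths Lp F"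
    using pq(1) Lprefix_prefix[of "terms_of (p @ q)" "[X]"] by (simp add: admissible_paths_def)
  ultimately show ?thesis using pq(2) by blast
qed

lemma Lprefix_imp_expecting_terminal:
  assumes "p \<in> admissible_paths Lp F" and "X \<in> TT" and "terms_of p @ [X] \<in> Lp"
    and "length (chars_of p) \<le> k"
  shows "\<exists>N \<alpha> \<beta> i. valid_item R S F k N \<alpha> (X # \<beta>) i (length (chars_of p))"
proof -
  from assms(3) obtain \<omega> where "derives R [S] ((map fst p @ [X]) @ \<omega>)"
    unfolding Lprefix_def terms_of_def by blast
  then have derivation: "derives R [S] (map fst p @ X # \<omega>)" by simp
  have "map fst p @ X # \<omega> \<noteq> [S]" using assms(2) start_not_terminal by (cases p) auto
  from derives_from_start[OF derivation this] obtain \<gamma>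
    where rule: "(S, \<gamma>) \<in> R" and gen: "generates R \<gamma> (map fst p @ X # \<omega>)" by blast
  have init: "valid_item R S F k S [] (\<gamma> @ []) 0 0" using valid_Init[OF rule] by simp
  have "admissible F 0 p" using assms(1) by (simp add: admissible_paths_def)
  from valid_item_before_symbol[OF gen init this]
  show ?thesis using assms(4) by simp
qed

lemma Tokens_candidates_eq_Wk:
  assumes "k \<le> length D" and terminals: "\<And>j t. t \<in> F j \<Longrightarrow> fst t \<in> TT"
  shows "{x. \<exists>X N \<alpha> \<beta> i. X \<in> TT \<and> Item N \<alpha> (X # \<beta>) i k \<in> valid_items R S F k \<and> x \<in> Lex X D k}
    = Wk TT Lex D Lp k (admissible_paths Lp F)"
proof (intro set_eqI iffI)
  fix x
  assume "x \<in> {x. \<exists>X N \<alpha> \<beta> i. X \<in> TT \<and> Item N \<alpha> (X # \<beta>) i k \<in> valid_items R S F k \<and> x \<in> Lex X D k}"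
  then obtain X N \<alpha> \<beta> i where X: "X \<in> TT" "x \<in> Lex X D k"
    and item: "valid_item R S F k N \<alpha> (X # \<beta>) i k"
    by auto
  have "\<exists>p \<in> admissible_paths Lp F. length (chars_of p) = k \<and> terms_of p @ [X] \<in> Lp"
    by (rule expecting_terminal_imp_Lprefix[OF _ X(1) item]) (rule terminals)
  then obtain p where "p \<in> admissible_paths Lp F" "length (chars_of p) = k" "terms_of p @ [X] \<in> Lp"
    by blast
  moreover have "fst x = X" using Lex_terminal[OF X(1) assms(1) X(2)] .
  ultimately show "x \<in> Wk TT Lex D Lp k (admissible_paths Lp F)"
    using X unfolding Wk_def Xk_def terms_of_def by auto
next
  fix x
  assume "x \<in> Wk TT Lex D Lp k (admissible_paths Lp F)"
  then obtain p where x: "fst x \<in> TT" "x \<in> Lex (fst x) D k" and p: "p \<in> admissible_paths Lp F"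
    "length (chars_of p) = k" "terms_of p @ [fst x] \<in> Lp"
    unfolding Wk_def Xk_def terms_of_def by auto
  from Lprefix_imp_expecting_terminal[OF p(1) x(1) p(3), of k] obtain N \<alpha> \<beta> i
    where "valid_item R S F k N \<alpha> (fst x # \<beta>) i k" using p(2) by auto
  then show "x \<in> {x. \<exists>X N \<alpha> \<beta> i. X \<in> TT \<and> Item N \<alpha> (X # \<beta>) i k \<in> valid_items R S F k \<and> x \<in> Lex X D k}"
    using x by (simp only: mem_Collect_eq mem_valid_items_iff) blast
qed

lemma accepted_path_iff_complete_item:
  assumes terminals: "\<And>j t. t \<in> F j \<Longrightarrow> fst t \<in> TT"
  shows "(\<exists>p \<in> admissible_paths Lp F. length (chars_of p) = n \<and> terms_of p \<in> Lang NN TT R S)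
    \<longleftrightarrow> (\<exists>\<alpha>. valid_item R S F n S \<alpha> [] 0 n)"
proof
  assume "\<exists>p \<in> admissible_paths Lp F. length (chars_of p) = n \<and> terms_of p \<in> Lang NN TT R S"
  then obtain p where p: "admissible F 0 p" "length (chars_of p) = n" "map fst p \<in> lists TT"
    "derives R [S] (map fst p)"
    by (auto simp: admissible_paths_def Lang_def terms_of_def)
  moreover have "map fst p \<noteq> [S]" using p(3) start_not_terminal by auto
  ultimately obtain \<gamma> where rule: "(S, \<gamma>) \<in> R" and gen: "generates R \<gamma> (map fst p)"
    using derives_from_start[of R S "map fst p"] by blast
  have init: "valid_item R S F n S [] (\<gamma> @ []) 0 0" using valid_Init[OF rule] by simp
  from valid_item_advance[OF gen init p(1)]
  have "valid_item R S F n S ([] @ \<gamma>) [] 0 (0 + length (chars_of p))" using p(2) by simp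
  then show "\<exists>\<alpha>. valid_item R S F n S \<alpha> [] 0 n" using p(2) by auto
next
  assume "\<exists>\<alpha>. valid_item R S F n S \<alpha> [] 0 n"
  then obtain \<alpha> where "valid_item R S F n S \<alpha> [] 0 n" by blast
  from valid_item_sound[OF this] obtain p q where rule: "(S, \<alpha>) \<in> R"
    and pq: "admissible F 0 (p @ q)" "length (chars_of p) = 0" "length (chars_of (p @ q)) = n"
      "generates R \<alpha> (map fst q)"
    by auto
  have "derives R [S] \<alpha>" using derives_rule[OF rule, of "[]" "[]"] by simp
  also have "derives R \<alpha> (map fst q)" using generates_imp_derives[OF pq(4)] .
  finally have derivation: "derives R [S] (map fst q)" .
  have q: "admissible F 0 q" "length (chars_of q) = n" using pq(1-3) by simp_all
  have "map fst q \<in> lists TT" using admissible_terminals[OF q(1) terminals] .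
  then have "terms_of q \<in> Lang NN TT R S" using derivation by (simp add: Lang_def terms_of_def)
  moreover have "terms_of q \<in> Lp"
    using \<open>map fst q \<in> lists TT\<close> derivation unfolding Lprefix_def terms_of_def
    by (auto intro!: bexI[of _ "[]"])
  ultimately show "\<exists>p \<in> admissible_paths Lp F. length (chars_of p) = n \<and> terms_of p \<in> Lang NN TT R S"
    using q by (auto simp: admissible_paths_def)
qed

end

context local_lexing_grammar
begin

definition P_stage :: "nat \<Rightarrow> nat \<Rightarrow> ('a, 'c) path set" where
  "P_stage k u = fst (PZ TT Lex Sel D Lp k (Pstart TT Lex Sel D Lp k) u)"

definition Z_stage :: "nat \<Rightarrow> nat \<Rightarrow> ('a, 'c) token set" where
  "Z_stage k u = snd (PZ TT Lex Sel D Lp k (Pstart TT Lex Sel D Lp k) u)"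

definition selected_tokens :: "nat \<Rightarrow> nat \<Rightarrow> nat \<Rightarrow> ('a, 'c) token set" where
  "selected_tokens k u j = (if j < k then (\<Union>v. Z_stage j v) else if j = k then Z_stage k u else {})"

lemma P_stage_0: "P_stage k 0 = Pstart TT Lex Sel D Lp k"
  by (simp add: P_stage_def)

lemma Z_stage_0: "Z_stage k 0 = {}"
  by (simp add: Z_stage_def)

lemma Z_stage_Suc: "Z_stage k (Suc u) = Sel (Z_stage k u) (Wk TT Lex D Lp k (P_stage k u))"
  by (simp add: Z_stage_def P_stage_def Let_def)

lemma P_stage_Suc: "P_stage k (Suc u) = limit (Append Lp k (Z_stage k (Suc u))) (P_stage k u)"
  by (simp add: Z_stage_def P_stage_def Let_def)

lemma Wk_mono: "P \<subseteq> P' \<Longrightarrow> Wk TT Lex D L k P \<subseteq> Wk TT Lex D L k P'"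
  unfolding Wk_def by blast

lemma Z_stage_subset_Wk: "Z_stage k u \<subseteq> Wk TT Lex D Lp k (P_stage k u)"
  and Z_stage_subset_Suc: "Z_stage k u \<subseteq> Z_stage k (Suc u)"
proof (induction u)
  case 0
  show "Z_stage k 0 \<subseteq> Wk TT Lex D Lp k (P_stage k 0)" "Z_stage k 0 \<subseteq> Z_stage k (Suc 0)"
    by (simp_all add: Z_stage_0)
next
  case (Suc u)
  have "P_stage k u \<subseteq> P_stage k (Suc u)" by (simp add: P_stage_Suc subset_limit)
  then show Z_Wk: "Z_stage k (Suc u) \<subseteq> Wk TT Lex D Lp k (P_stage k (Suc u))"
    using Sel_bounds[OF Suc.IH(1)] Wk_mono unfolding Z_stage_Suc by blast
  show "Z_stage k (Suc u) \<subseteq> Z_stage k (Suc (Suc u))"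
    using Sel_bounds[OF Z_Wk] by (simp add: Z_stage_Suc[of k "Suc u"])
qed

lemma mono_Z_stage: "mono (Z_stage k)"
  using Z_stage_subset_Suc by (simp add: mono_iff_le_Suc)

lemma Z_stage_tokens: "x \<in> Z_stage k u \<Longrightarrow> fst x \<in> TT"
  using Z_stage_subset_Wk unfolding Wk_def Xk_def by blast

lemma selected_tokens_terminal: "t \<in> selected_tokens k u j \<Longrightarrow> fst t \<in> TT"
  by (auto simp: selected_tokens_def Z_stage_tokens split: if_splits)

lemma mono_selected_tokens: "mono (\<lambda>u. selected_tokens k u j)"
  using monoD[OF mono_Z_stage] by (intro monoI) (auto simp: selected_tokens_def)

lemma selected_tokens_Suc: "selected_tokens k (Suc u) = (selected_tokens k u)(k := Z_stage k (Suc u))"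
  by (rule ext) (simp add: selected_tokens_def)

lemma selected_tokens_Suc_0: "selected_tokens (Suc k) 0 j = (\<Union>u. selected_tokens k u j)"
  by (cases "j < k"; cases "j = k") (auto simp: selected_tokens_def Z_stage_0)

lemma selected_tokens_0_0: "selected_tokens 0 0 = (\<lambda>_. {})"
  by (rule ext) (simp add: selected_tokens_def Z_stage_0)

lemma P_stage_eq_admissible_paths_from_start:
  assumes "P_stage k 0 = admissible_paths Lp (selected_tokens k 0)"
  shows "P_stage k u = admissible_paths Lp (selected_tokens k u)"
proof (induction u)
  case 0
  show ?case using assms .
next
  case (Suc u)
  have "P_stage k (Suc u) = limit (Append Lp k (Z_stage k (Suc u))) (admissible_paths Lp (selected_tokens k u))"
    using Suc by (simp add: P_stage_Suc)
  also have "\<dots> = admissible_paths Lp ((selected_tokens k u)(k := Z_stage k (Suc u)))"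
    by (rule limit_Append_admissible_paths)
      (auto simp: selected_tokens_def intro: Lprefix_prefix Z_stage_subset_Suc[THEN subsetD])
  finally show ?case by (simp only: selected_tokens_Suc)
qed

lemma P_stage_eq_admissible_paths: "P_stage k u = admissible_paths Lp (selected_tokens k u)"
proof -
  have "P_stage k 0 = admissible_paths Lp (selected_tokens k 0)"
  proof (induction k)
    case 0
    show ?case by (simp add: P_stage_0 selected_tokens_0_0 admissible_paths_empty_family Lprefix_Nil)
  next
    case (Suc k)
    have "P_stage (Suc k) 0 = (\<Union>u. P_stage k u)"
      by (simp add: P_stage_0 Pinf_def P_stage_def)
    also have "\<dots> = (\<Union>u. admissible_paths Lp (selected_tokens k u))"
      using P_stage_eq_admissible_paths_from_start[OF Suc] by simp
    also have "\<dots> = admissible_paths Lp (\<lambda>j. \<Union>u. selected_tokens k u j)"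
      by (rule admissible_paths_Union_chain[symmetric, OF mono_selected_tokens])
    finally show ?case by (simp add: selected_tokens_Suc_0)
  qed
  then show ?thesis by (rule P_stage_eq_admissible_paths_from_start)
qed

definition J_stage :: "nat \<Rightarrow> nat \<Rightarrow> 'a item set" where
  "J_stage k u = fst (JT R TT Lex Sel D k (Jstart R S TT Lex Sel D k) u)"

definition T_stage :: "nat \<Rightarrow> nat \<Rightarrow> ('a, 'c) token set" where
  "T_stage k u = snd (JT R TT Lex Sel D k (Jstart R S TT Lex Sel D k) u)"

lemma J_stage_0: "J_stage k 0 = Jstart R S TT Lex Sel D k"
  by (simp add: J_stage_def)

lemma T_stage_0: "T_stage k 0 = {}"
  by (simp add: T_stage_def)

lemma T_stage_Suc: "T_stage k (Suc u) = Tokens TT Lex Sel D (T_stage k u) k (J_stage k u)"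
  by (simp add: T_stage_def J_stage_def Let_def)

lemma J_stage_Suc: "J_stage k (Suc u) = pi R k (T_stage k (Suc u)) (J_stage k u)"
  by (simp add: T_stage_def J_stage_def Let_def)

text \<open>Earley's token selection follows the semantic one because the candidate tokens at
  each stage coincide.\<close>
lemma J_stage_eq_valid_items_from_start:
  assumes "k \<le> length D" and "J_stage k 0 = valid_items R S (selected_tokens k 0) k"
  shows "J_stage k u = valid_items R S (selected_tokens k u) k \<and> T_stage k u = Z_stage k u"
proof (induction u)
  case 0
  show ?case using assms(2) by (simp add: T_stage_0 Z_stage_0)
next
  case (Suc u)
  have "T_stage k (Suc u) = Sel (Z_stage k u) (Wk TT Lex D Lp k (admissible_paths Lp (selected_tokens k u)))"
    using Suc Tokens_candidates_eq_Wk[OF assms(1) selected_tokens_terminal] by (simp add: T_stage_Suc Tokens_def)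
  also have "\<dots> = Z_stage k (Suc u)" by (simp add: Z_stage_Suc P_stage_eq_admissible_paths)
  finally have T: "T_stage k (Suc u) = Z_stage k (Suc u)" .
  have "J_stage k (Suc u) = pi R k (Z_stage k (Suc u)) (valid_items R S (selected_tokens k u) k)"
    using Suc T by (simp add: J_stage_Suc)
  also have "\<dots> = valid_items R S ((selected_tokens k u)(k := Z_stage k (Suc u))) k"
    by (rule pi_valid_items_update) (simp add: selected_tokens_def Z_stage_subset_Suc)
  finally have "J_stage k (Suc u) = valid_items R S (selected_tokens k (Suc u)) k"
    by (simp only: selected_tokens_Suc)
  with T show ?case by simp
qed

lemma J_stage_eq_valid_items:
  assumes "k \<le> length D"
  shows "J_stage k u = valid_items R S (selected_tokens k u) k"
proof -
  have "J_stage k 0 = valid_items R S (selected_tokens k 0) k"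
    using assms
  proof (induction k)
    case 0
    show ?case by (simp add: J_stage_0 pi_Init_eq_valid_items selected_tokens_0_0)
  next
    case (Suc k)
    then have "k \<le> length D" by simp
    have "J_stage (Suc k) 0 = pi R (Suc k) ({} :: ('a, 'c) token set) (\<Union>u. J_stage k u)"
      by (simp add: J_stage_0 Ik_def J_stage_def)
    also have "\<dots> = pi R (Suc k) ({} :: ('a, 'c) token set) (\<Union>u. valid_items R S (selected_tokens k u) k)"
      using J_stage_eq_valid_items_from_start[OF \<open>k \<le> length D\<close> Suc.IH[OF \<open>k \<le> length D\<close>]] by simp
    also have "\<dots> = valid_items R S (selected_tokens (Suc k) 0) (Suc k)"
    proof (rule pi_Union_valid_items[OF mono_selected_tokens])
      show "selected_tokens (Suc k) 0 j = (\<Union>u. selected_tokens k u j)" for j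
        by (rule selected_tokens_Suc_0)
      then show "selected_tokens k u j \<subseteq> selected_tokens (Suc k) 0 j" for u j
        by blast
      show "selected_tokens (Suc k) 0 (Suc k) = {}"
        by (simp add: selected_tokens_def Z_stage_0)
    qed
    finally show ?case .
  qed
  then show ?thesis using J_stage_eq_valid_items_from_start[OF assms] by blast
qed

lemma PP_eq_Union_P_stage: "PP NN TT R S Lex Sel D = (\<Union>u. P_stage (length D) u)"
  by (simp add: PP_def Pinf_def P_stage_def Let_def)

lemma II_eq_Union_J_stage: "II R S TT Lex Sel D = (\<Union>u. J_stage (length D) u)"
  by (simp add: II_def Ik_def J_stage_def)

theorem Earley_local_lexing_correct:
  "D \<in> LangSigma NN TT R S Lex Sel \<longleftrightarrow> (\<exists>\<alpha>. Item S \<alpha> [] 0 (length D) \<in> II R S TT Lex Sel D)"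
proof -
  let ?n = "length D"
  have "D \<in> LangSigma NN TT R S Lex Sel \<longleftrightarrow>
      (\<exists>u. \<exists>p \<in> admissible_paths Lp (selected_tokens ?n u). length (chars_of p) = ?n \<and> terms_of p \<in> Lang NN TT R S)"
    unfolding LangSigma_def mem_Collect_eq ll_def PP_eq_Union_P_stage P_stage_eq_admissible_paths
    by (simp add: Bex_def) blast
  also have "\<dots> \<longleftrightarrow> (\<exists>u \<alpha>. valid_item R S (selected_tokens ?n u) ?n S \<alpha> [] 0 ?n)"
    by (simp only: accepted_path_iff_complete_item[OF selected_tokens_terminal])
  also have "\<dots> \<longleftrightarrow> (\<exists>\<alpha>. Item S \<alpha> [] 0 ?n \<in> II R S TT Lex Sel D)"
    unfolding II_eq_Union_J_stage J_stage_eq_valid_items[OF order.refl] by simp blast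
  finally show ?thesis .
qed

end

theorem theorem2:
  fixes NN TT :: "'a set" and R :: "('a \<times> 'a list) set" and S :: 'a
    and Lex :: "'a \<Rightarrow> 'c list \<Rightarrow> nat \<Rightarrow> ('a \<times> 'c list) set"
    and Sel :: "('a \<times> 'c list) set \<Rightarrow> ('a \<times> 'c list) set \<Rightarrow> ('a \<times> 'c list) set"
    and D :: "'c list"
  assumes "is_cfg NN TT R S"
    and "is_local_lexing TT Lex Sel"
  shows "D \<in> LangSigma NN TT R S Lex Sel \<longleftrightarrow>
         (\<exists>\<alpha>. Item S \<alpha> [] 0 (length D) \<in> II R S TT Lex Sel D)"
proof -
  interpret local_lexing_grammar NN TT R S Lex Sel D using assms by unfold_locales
  show ?thesis by (rule Earley_local_lexing_correct)
qed


end
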